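(* Let $n\ge 2$, let $\mathbb{P}\in\mathcal{C}_n$, and let $\mathcal{S}\subset\mathbb{R}_{++}$ be a finite set. Then \[ R_n(\mathbb{P})\ \ge\ R_n\ \ge\ R_n(\mathcal{S}),\qquad\text{where}\quad R_n(\mathcal{S}):=\inf_{g\in\mathcal{G}_n(\mathcal{S})}\ \sup_{x,y\in\mathcal{S}}\big\{\phi^{g}(x,y)\ :\ g(\mathbf{z})=g(\mathbf{z}\pi)\ \text{for all permutations }\pi\text{ of }[n]\text{ and all }\mathbf{z}\in\overline{\mathcal{S}}^n\big\}. \]
   Context: Scheduling on two machines with $n$ tasks. A processing-time matrix is $T=(T_{ij})\in\mathbb{R}_{++}^{2\times n}$. An allocation is $X\in\{0,1\}^{2\times n}$ with $X_{1j}+X_{2j}=1$ for all $j$; makespan $M(X,T)=\max_{i\in\{1,2\}}\sum_j X_{ij}T_{ij}$; $M^*(T)=\min_X M(X,T)$. $\mathcal{P}_n$ is the set of Borel probability measures on $\mathbb{R}^n$ supported in $\mathbb{R}_{++}^n$. For $\mathbb{P}\in\mathcal{P}_n$, algorithm $\mathcal{A}^{\mathbb{P}}$ draws $\mathbf{z}\sim\mathbb{P}$ and sends task $j$ to machine 1 iff $T_{1j}/T_{2j}<z_j$ (else to machine 2). $M(\mathbb{P},T)$ is the expected makespan of this allocation, $R_n(\mathbb{P},T)=M(\mathbb{P},T)/M^*(T)$, $R_n(\mathbb{P})=\sup_{T\in\mathbb{R}_{++}^{2\times n}}R_n(\mathbb{P},T)\in[1,\infty]$, $R_n=\inf_{\mathbb{P}\in\mathcal{P}_n}R_n(\mathbb{P})$.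 $\mathcal{C}_n$ is the set of $\mathbb{P}\in\mathcal{P}_n$ invariant under coordinate permutations (if $\mathbf{z}\sim\mathbb{P}$ then $\mathbf{z}\pi:=(z_{\pi(1)},\dots,z_{\pi(n)})\sim\mathbb{P}$ for every permutation $\pi$). For $D\subseteq\mathbb{R}$ put $\overline{D}=D\cup\{0\}\cup\{\infty\}$. For $\mathbf{x}\le\mathbf{y}$ (coordinatewise) let $V_{xy}=\{x_1,y_1\}\times\cdots\times\{x_n,y_n\}$ and for $\mathbf{b}\in V_{xy}$ let $\mathrm{sgn}(\mathbf{b})=1$ if $b_i=x_i$ for an even number of indices $i$ and $-1$ otherwise. A function $G$ is $n$-increasing on $\overline{D}^n$ if $\sum_{\mathbf{b}\in V_{xy}}\mathrm{sgn}(\mathbf{b})G(\mathbf{b})\ge0$ for all $\mathbf{x}\le\mathbf{y}$ in $\overline{D}^n$. For $\mathcal{S}\subseteq\mathbb{R}_{++}$, $\mathcal{G}_n(\mathcal{S})$ is the set of functions $g:\overline{\mathcal{S}}^n\to[0,1]$ that are right continuous on $\overline{\mathcal{S}}^n$, $n$-increasing on $\overline{\mathcal{S}}^n$, satisfy $g(\mathbf{z})=0$ whenever some $z_i=0$, and satisfy $g(\infty,\dots,\infty)=1$. For $g\in\mathcal{G}_n(\mathcal{S})$ and $x,y\in\mathcal{S}$, \[ \phi^{g}(x,y)=1+y-\min\{1,1-\tfrac1x+y\}\,g(x,\infty,\dots,\infty)-y\,g(y,\infty,\dots,\infty)+\min\{1+\tfrac1x,1+y\}\,g(x,y,\infty,\dots,\infty).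 \] *)

theory Defs
  imports "HOL-Probability.Probability"
begin

text \<open>Tasks are indexed by 0..n-1. A processing-time matrix T is given by its two
rows T1, T2 :: nat => real (only entries j < n matter). An allocation X is encoded by
the set A of tasks sent to machine 1 (the others go to machine 2).\<close>

definition pos_times :: "nat \<Rightarrow> (nat \<Rightarrow> real) \<Rightarrow> (nat \<Rightarrow> real) \<Rightarrow> bool" where
  "pos_times n T1 T2 \<longleftrightarrow> (\<forall>j<n. 0 < T1 j \<and> 0 < T2 j)"

definition makespan :: "nat \<Rightarrow> (nat \<Rightarrow> real) \<Rightarrow> (nat \<Rightarrow> real) \<Rightarrow> nat set \<Rightarrow> real" where
  "makespan n T1 T2 A = max (\<Sum>j\<in>A \<inter> {..<n}. T1 j) (\<Sum>j\<in>{..<n} - A. T2 j)"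

definition opt_makespan :: "nat \<Rightarrow> (nat \<Rightarrow> real) \<Rightarrow> (nat \<Rightarrow> real) \<Rightarrow> real" where
  "opt_makespan n T1 T2 = Min (makespan n T1 T2 ` Pow {..<n})"

definition alg_alloc :: "nat \<Rightarrow> (nat \<Rightarrow> real) \<Rightarrow> (nat \<Rightarrow> real) \<Rightarrow> (nat \<Rightarrow> real) \<Rightarrow> nat set" where
  "alg_alloc n T1 T2 z = {j\<in>{..<n}. T1 j / T2 j < z j}"

definition exp_makespan :: "nat \<Rightarrow> (nat \<Rightarrow> real) measure \<Rightarrow> (nat \<Rightarrow> real) \<Rightarrow> (nat \<Rightarrow> real) \<Rightarrow> real" where
  "exp_makespan n P T1 T2 = (\<integral>z. makespan n T1 T2 (alg_alloc n T1 T2 z) \<partial>P)"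

text \<open>P_n: Borel probability measures on R^n (realised on the extensional function
space over {..<n}) that are concentrated on the positive orthant.\<close>
definition Pn :: "nat \<Rightarrow> (nat \<Rightarrow> real) measure set" where
  "Pn n = {P. sets P = sets (PiM {..<n} (\<lambda>_. borel :: real measure)) \<and> prob_space P
              \<and> (AE z in P. \<forall>j<n. 0 < z j)}"

definition Cn :: "nat \<Rightarrow> (nat \<Rightarrow> real) measure set" where
  "Cn n = {P \<in> Pn n. \<forall>\<pi>. \<pi> permutes {..<n} \<longrightarrow> distr P P (\<lambda>z. z \<circ> \<pi>) = P}"

definition ratio_T :: "nat \<Rightarrow> (nat \<Rightarrow> real) measure \<Rightarrow> (nat \<Rightarrow> real) \<Rightarrow> (nat \<Rightarrow> real) \<Rightarrow> real" where
  "ratio_T n P T1 T2 = exp_makespan n P T1 T2 / opt_makespan n T1 T2"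

definition ratio_P :: "nat \<Rightarrow> (nat \<Rightarrow> real) measure \<Rightarrow> ereal" where
  "ratio_P n P = (SUP T \<in> {(T1, T2). pos_times n T1 T2}. ereal (ratio_T n P (fst T) (snd T)))"

definition Rn :: "nat \<Rightarrow> ereal" where
  "Rn n = (INF P \<in> Pn n. ratio_P n P)"

text \<open>Points of the grid (S \<union> {0,\<infinity>})^n are represented as lists of extended reals of length n.\<close>

definition Sbar :: "real set \<Rightarrow> ereal set" where
  "Sbar S = ereal ` S \<union> {0, \<infinity>}"

definition gdom :: "nat \<Rightarrow> real set \<Rightarrow> ereal list set" where
  "gdom n S = {z. length z = n \<and> set z \<subseteq> Sbar S}"

definition right_cont_on_grid :: "nat \<Rightarrow> real set \<Rightarrow> (ereal list \<Rightarrow> real) \<Rightarrow> bool" where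
  "right_cont_on_grid n S g \<longleftrightarrow>
     (\<forall>z \<in> gdom n S. \<forall>w :: nat \<Rightarrow> ereal list.
        (\<forall>k. w k \<in> gdom n S \<and> list_all2 (\<le>) z (w k)) \<and> (\<forall>i<n. (\<lambda>k. w k ! i) \<longlonglongrightarrow> z ! i)
        \<longrightarrow> (\<lambda>k. g (w k)) \<longlonglongrightarrow> g z)"

text \<open>n-increasing: the g-volume of every box [x,y] with corners in the grid is
nonnegative; the vertex taking x_i exactly for i in K carries sign (-1)^|K|.\<close>
definition n_increasing_on_grid :: "nat \<Rightarrow> real set \<Rightarrow> (ereal list \<Rightarrow> real) \<Rightarrow> bool" where
  "n_increasing_on_grid n S g \<longleftrightarrow>
     (\<forall>x \<in> gdom n S. \<forall>y \<in> gdom n S. list_all2 (\<le>) x y \<longrightarrow>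
        0 \<le> (\<Sum>K \<in> Pow {..<n}. (-1) ^ card K * g (map (\<lambda>i. if i \<in> K then x ! i else y ! i) [0..<n])))"

definition Gn :: "nat \<Rightarrow> real set \<Rightarrow> (ereal list \<Rightarrow> real) set" where
  "Gn n S = {g. (\<forall>z \<in> gdom n S. 0 \<le> g z \<and> g z \<le> 1)
               \<and> right_cont_on_grid n S g
               \<and> n_increasing_on_grid n S g
               \<and> (\<forall>z \<in> gdom n S. (\<exists>i<n. z ! i = 0) \<longrightarrow> g z = 0)
               \<and> g (replicate n \<infinity>) = 1}"

definition symmetric_on_grid :: "nat \<Rightarrow> real set \<Rightarrow> (ereal list \<Rightarrow> real) \<Rightarrow> bool" where
  "symmetric_on_grid n S g \<longleftrightarrow>
     (\<forall>z \<in> gdom n S. \<forall>\<pi>. \<pi> permutes {..<n} \<longrightarrow> g (map (\<lambda>i. z ! \<pi> i) [0..<n]) = g z)"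

definition phi :: "nat \<Rightarrow> (ereal list \<Rightarrow> real) \<Rightarrow> real \<Rightarrow> real \<Rightarrow> real" where
  "phi n g x y = 1 + y
      - min 1 (1 - 1 / x + y) * g (ereal x # replicate (n - 1) \<infinity>)
      - y * g (ereal y # replicate (n - 1) \<infinity>)
      + min (1 + 1 / x) (1 + y) * g (ereal x # ereal y # replicate (n - 2) \<infinity>)"

definition Rn_grid :: "nat \<Rightarrow> real set \<Rightarrow> ereal" where
  "Rn_grid n S = (INF g \<in> {g \<in> Gn n S. symmetric_on_grid n S g}.
                    SUP p \<in> S \<times> S. ereal (phi n g (fst p) (snd p)))"

end

theory Submission
  imports Defs
begin

text \<open>Symmetrising the distribution function of any \<open>P \<in> P\<^sub>n\<close> over coordinate
  permutations gives a symmetric \<open>g \<in> G\<^sub>n(S)\<close>. Take an instance with two tasks \<open>a, b\<close> of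
  processing times \<open>(1, 1/x)\<close> and \<open>(y, 1)\<close> and all other tasks negligible. Its optimal makespan
  is about 1, while the algorithm's makespan dominates, pointwise in the thresholds \<open>z\<close>, an affine
  combination of the indicators of \<open>z\<^sub>a \<le> x\<close>, \<open>z\<^sub>b \<le> y\<close> and their conjunction.
  Averaging its expectation over the choice of the ordered pair \<open>(a, b)\<close> yields exactly
  \<open>\<phi>\<^sup>g(x, y)\<close>, hence \<open>\<phi>\<^sup>g(x, y) \<le> R\<^sub>n(P)\<close> for all \<open>x, y\<close>.\<close>

abbreviation perms :: "nat \<Rightarrow> (nat \<Rightarrow> nat) set" where
  "perms n \<equiv> {\<pi>. \<pi> permutes {..<n}}"

lemma permutes_lessThan_less: "\<pi> permutes {..<n} \<Longrightarrow> i < n \<Longrightarrow> \<pi> i < n"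
  using permutes_in_image[of \<pi> "{..<n}" i] by simp

lemma sum_ge_two_terms:
  fixes f :: "'a \<Rightarrow> real"
  assumes "finite A" "a \<noteq> b" "\<And>j. j \<in> A \<Longrightarrow> 0 \<le> f j"
  shows "f a * of_bool (a \<in> A) + f b * of_bool (b \<in> A) \<le> sum f A"
proof -
  have "f a * of_bool (a \<in> A) + f b * of_bool (b \<in> A) = sum f (A \<inter> {a, b})"
    using assms(2) by (cases "a \<in> A"; cases "b \<in> A") (auto simp: Int_insert_right)
  also have "\<dots> \<le> sum f A"
    using assms by (intro sum_mono2) auto
  finally show ?thesis .
qed

lemma ereal_le_of_le_mult_1_plus:
  fixes a R :: ereal
  assumes "\<And>d. 0 < d \<Longrightarrow> a \<le> R * ereal (1 + d)"
  shows "a \<le> R"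
proof (cases R)
  case (real r)
  have "((\<lambda>d. ereal (r * (1 + d))) \<longlongrightarrow> ereal (r * (1 + 0))) (at_right 0)"
    by (intro tendsto_intros)
  moreover have "\<forall>\<^sub>F d in at_right 0. a \<le> ereal (r * (1 + d))"
    using assms by (intro eventually_mono[OF eventually_at_right_less]) (simp add: real)
  ultimately show ?thesis
    using real by (intro tendsto_le[OF _ _ tendsto_const]) auto
next
  case MInf
  then show ?thesis
    using assms[of 1] by simp
qed simp

lemma ereal_mean_le:
  fixes f :: "'a \<Rightarrow> real"
  assumes "finite A" "A \<noteq> {}" "\<And>i. i \<in> A \<Longrightarrow> ereal (f i) \<le> R"
  shows "ereal ((\<Sum>i\<in>A. f i) / card A) \<le> R"
proof (cases R)
  case (real r)
  have "(\<Sum>i\<in>A. f i) \<le> (\<Sum>i\<in>A. r)"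
    using assms(3) by (intro sum_mono) (simp add: real)
  then show ?thesis
    using assms(1,2) by (simp add: real divide_le_eq mult.commute)
next
  case MInf
  then show ?thesis
    using assms(2,3) by force
qed simp

lemma Pn_prob_space: "P \<in> Pn n \<Longrightarrow> prob_space P"
  by (simp add: Pn_def)

lemma Pn_component_measurable:
  assumes "P \<in> Pn n" "j < n"
  shows "(\<lambda>z. z j) \<in> borel_measurable P"
proof -
  have "sets P = sets (PiM {..<n} (\<lambda>_. borel :: real measure))"
    using assms(1) by (simp add: Pn_def)
  then have "borel_measurable P = PiM {..<n} (\<lambda>_. borel :: real measure) \<rightarrow>\<^sub>M borel"
    by (rule measurable_cong_sets) simp
  moreover have "(\<lambda>z. z j) \<in> PiM {..<n} (\<lambda>_. borel :: real measure) \<rightarrow>\<^sub>M borel"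
    using assms(2) by (intro measurable_component_singleton) simp
  ultimately show ?thesis
    by metis
qed

lemma Pn_integrable_bounded:
  fixes f :: "(nat \<Rightarrow> real) \<Rightarrow> real"
  assumes "P \<in> Pn n" "f \<in> borel_measurable P" "\<And>z. \<bar>f z\<bar> \<le> B"
  shows "integrable P f"
proof -
  interpret prob_space P using Pn_prob_space[OF assms(1)] .
  show ?thesis using assms(2,3) by (intro integrable_const_bound[where B=B]) auto
qed

section \<open>Symmetrised distribution functions\<close>

text \<open>\<open>sym_cdf n P\<close> is the distribution function of the uniform mixture, over all
  permutations \<open>\<pi>\<close>, of the laws of \<open>z \<circ> \<pi>\<close> under \<open>P\<close>.\<close>

definition box_indicator :: "nat \<Rightarrow> (nat \<Rightarrow> nat) \<Rightarrow> ereal list \<Rightarrow> (nat \<Rightarrow> real) \<Rightarrow> real" where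
  "box_indicator n \<pi> w z = (\<Prod>i<n. of_bool (ereal (z (\<pi> i)) \<le> w ! i))"

definition sym_cdf :: "nat \<Rightarrow> (nat \<Rightarrow> real) measure \<Rightarrow> ereal list \<Rightarrow> real" where
  "sym_cdf n P w = (\<Sum>\<pi>\<in>perms n. \<integral>z. box_indicator n \<pi> w z \<partial>P) / fact n"

lemma box_indicator_bounds: "0 \<le> box_indicator n \<pi> w z" "box_indicator n \<pi> w z \<le> 1"
  unfolding box_indicator_def by (auto intro!: prod_nonneg prod_le_1)

lemma borel_measurable_of_bool_le:
  "f \<in> borel_measurable M \<Longrightarrow> (\<lambda>z. of_bool (ereal (f z) \<le> c) :: real) \<in> borel_measurable M"
  by measurable

lemma box_indicator_measurable:
  assumes "P \<in> Pn n" "\<pi> permutes {..<n}"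
  shows "box_indicator n \<pi> w \<in> borel_measurable P"
proof -
  have "\<And>i. i < n \<Longrightarrow> (\<lambda>z. z (\<pi> i)) \<in> borel_measurable P"
    using assms by (blast intro: Pn_component_measurable permutes_lessThan_less)
  then show ?thesis
    unfolding box_indicator_def by (intro borel_measurable_prod borel_measurable_of_bool_le) auto
qed

lemma integral_box_indicator_bounds:
  assumes "P \<in> Pn n" "\<pi> permutes {..<n}"
  shows "0 \<le> (\<integral>z. box_indicator n \<pi> w z \<partial>P)" "(\<integral>z. box_indicator n \<pi> w z \<partial>P) \<le> 1"
proof -
  interpret prob_space P using Pn_prob_space[OF assms(1)] .
  have int: "integrable P (box_indicator n \<pi> w)"
    using assms box_indicator_bounds[of n \<pi> w]
    by (intro Pn_integrable_bounded[where B=1] box_indicator_measurable) auto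
  show "0 \<le> (\<integral>z. box_indicator n \<pi> w z \<partial>P)"
    by (simp add: box_indicator_bounds)
  have "(\<integral>z. box_indicator n \<pi> w z \<partial>P) \<le> (\<integral>z. 1 \<partial>P)"
    using int by (intro integral_mono) (auto simp: box_indicator_bounds)
  then show "(\<integral>z. box_indicator n \<pi> w z \<partial>P) \<le> 1"
    by (simp add: prob_space)
qed

lemma sym_cdf_bounds:
  assumes "P \<in> Pn n"
  shows "0 \<le> sym_cdf n P w" "sym_cdf n P w \<le> 1"
proof -
  have "(\<Sum>\<pi>\<in>perms n. \<integral>z. box_indicator n \<pi> w z \<partial>P) \<le> (\<Sum>\<pi>\<in>perms n. 1)"
    using assms by (intro sum_mono) (simp add: integral_box_indicator_bounds)
  then show "sym_cdf n P w \<le> 1"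
    by (simp add: sym_cdf_def card_permutations)
  show "0 \<le> sym_cdf n P w"
    using assms unfolding sym_cdf_def
    by (intro divide_nonneg_pos sum_nonneg) (auto simp: integral_box_indicator_bounds)
qed

lemma sym_cdf_top:
  assumes "P \<in> Pn n"
  shows "sym_cdf n P (replicate n \<infinity>) = 1"
proof -
  interpret prob_space P using Pn_prob_space[OF assms] .
  have "box_indicator n \<pi> (replicate n \<infinity>) = (\<lambda>z. 1)" for \<pi>
    by (simp add: box_indicator_def fun_eq_iff)
  then show ?thesis
    by (simp add: sym_cdf_def prob_space card_permutations)
qed

lemma sym_cdf_eq_0:
  assumes P: "P \<in> Pn n" and "i < n" "w ! i = 0"
  shows "sym_cdf n P w = 0"
proof -
  have "(\<integral>z. box_indicator n \<pi> w z \<partial>P) = 0" if \<pi>: "\<pi> permutes {..<n}" for \<pi>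
  proof -
    have "AE z in P. \<forall>j<n. 0 < z j"
      using P by (simp add: Pn_def)
    then have "AE z in P. box_indicator n \<pi> w z = 0"
    proof eventually_elim
      case (elim z)
      then have "0 < z (\<pi> i)"
        using \<pi> \<open>i < n\<close> permutes_lessThan_less by blast
      then show ?case
        using \<open>i < n\<close> \<open>w ! i = 0\<close> unfolding box_indicator_def
        by (intro prod_zero bexI[of _ i]) auto
    qed
    then show ?thesis
      by (simp add: integral_cong_AE[where g="\<lambda>_. 0"] box_indicator_measurable[OF P \<pi>])
  qed
  then show ?thesis
    by (simp add: sym_cdf_def)
qed

lemma box_indicator_vertex:
  assumes "K \<subseteq> {..<n}"
  shows "box_indicator n \<pi> (map (\<lambda>i. if i \<in> K then x ! i else y ! i) [0..<n]) z =
    (\<Prod>i\<in>K. of_bool (ereal (z (\<pi> i)) \<le> x ! i)) * (\<Prod>i\<in>{..<n}-K. of_bool (ereal (z (\<pi> i)) \<le> y ! i))"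
proof -
  have "box_indicator n \<pi> (map (\<lambda>i. if i \<in> K then x ! i else y ! i) [0..<n]) z =
      (\<Prod>i<n. if i \<in> K then of_bool (ereal (z (\<pi> i)) \<le> x ! i) else of_bool (ereal (z (\<pi> i)) \<le> y ! i))"
    unfolding box_indicator_def by (intro prod.cong) auto
  also have "\<dots> = (\<Prod>i\<in>K. of_bool (ereal (z (\<pi> i)) \<le> x ! i)) * (\<Prod>i\<in>{..<n}-K. of_bool (ereal (z (\<pi> i)) \<le> y ! i))"
    using assms by (simp add: prod.If_cases Int_absorb1 Diff_eq)
  finally show ?thesis .
qed

text \<open>The alternating sum over the vertices of a box is the indicator of the box itself.\<close>
lemma box_indicator_alternating_sum:
  "(\<Sum>K\<in>Pow {..<n}. (-1) ^ card K * box_indicator n \<pi> (map (\<lambda>i. if i \<in> K then x ! i else y ! i) [0..<n]) z)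
    = (\<Prod>i<n. of_bool (ereal (z (\<pi> i)) \<le> y ! i) - of_bool (ereal (z (\<pi> i)) \<le> x ! i))"
proof -
  have "(\<Prod>i<n. of_bool (ereal (z (\<pi> i)) \<le> y ! i) - of_bool (ereal (z (\<pi> i)) \<le> x ! i) :: real)
      = (\<Prod>i<n. - of_bool (ereal (z (\<pi> i)) \<le> x ! i) + of_bool (ereal (z (\<pi> i)) \<le> y ! i))"
    by simp
  also have "\<dots> = (\<Sum>K\<in>Pow {..<n}. (\<Prod>i\<in>K. - of_bool (ereal (z (\<pi> i)) \<le> x ! i)) *
      (\<Prod>i\<in>{..<n}-K. of_bool (ereal (z (\<pi> i)) \<le> y ! i)))"
    by (rule prod_add) simp
  also have "\<dots> = (\<Sum>K\<in>Pow {..<n}. (-1) ^ card K *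
      box_indicator n \<pi> (map (\<lambda>i. if i \<in> K then x ! i else y ! i) [0..<n]) z)"
    by (intro sum.cong refl) (simp add: prod_uminus box_indicator_vertex)
  finally show ?thesis ..
qed

lemma sym_cdf_n_increasing:
  assumes P: "P \<in> Pn n" and "length x = n" "length y = n" "list_all2 (\<le>) x y"
  shows "0 \<le> (\<Sum>K\<in>Pow {..<n}. (-1) ^ card K * sym_cdf n P (map (\<lambda>i. if i \<in> K then x ! i else y ! i) [0..<n]))"
proof -
  let ?v = "\<lambda>K. map (\<lambda>i. if i \<in> K then x ! i else y ! i) [0..<n]"
  have int: "integrable P (\<lambda>z. (-1) ^ card K * box_indicator n \<pi> (?v K) z)"
    if "\<pi> permutes {..<n}" for \<pi> K
    using P that box_indicator_bounds[of n \<pi>]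
    by (intro integrable_mult_right Pn_integrable_bounded[where B=1] box_indicator_measurable) auto
  have "(\<Sum>K\<in>Pow {..<n}. (-1) ^ card K * sym_cdf n P (?v K))
      = (\<Sum>\<pi>\<in>perms n. \<Sum>K\<in>Pow {..<n}. \<integral>z. (-1) ^ card K * box_indicator n \<pi> (?v K) z \<partial>P) / fact n"
    unfolding sym_cdf_def
    by (simp add: sum_distrib_left sum_divide_distrib[symmetric] sum.swap[of _ "Pow {..<n}"])
  also have "\<dots> = (\<Sum>\<pi>\<in>perms n. \<integral>z. (\<Sum>K\<in>Pow {..<n}. (-1) ^ card K * box_indicator n \<pi> (?v K) z) \<partial>P) / fact n"
    using int by (simp add: Bochner_Integration.integral_sum)
  also have "\<dots> = (\<Sum>\<pi>\<in>perms n. \<integral>z. (\<Prod>i<n. of_bool (ereal (z (\<pi> i)) \<le> y ! i)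
      - of_bool (ereal (z (\<pi> i)) \<le> x ! i)) \<partial>P) / fact n"
    by (simp only: box_indicator_alternating_sum)
  also have "0 \<le> \<dots>"
  proof -
    have "x ! i \<le> y ! i" if "i < n" for i
      using assms(2-4) that by (simp add: list_all2_nthD)
    then show ?thesis
      by (intro divide_nonneg_pos sum_nonneg Bochner_Integration.integral_nonneg prod_nonneg) (auto dest: order_trans)
  qed
  finally show ?thesis .
qed

lemma sym_cdf_right_cont_on_grid:
  assumes "finite S"
  shows "right_cont_on_grid n S (sym_cdf n P)"
  unfolding right_cont_on_grid_def
proof (intro ballI allI impI)
  fix z w
  assume z: "z \<in> gdom n S"
    and w: "(\<forall>k. w k \<in> gdom n S \<and> list_all2 (\<le>) z (w k)) \<and> (\<forall>i<n. (\<lambda>k. w k ! i) \<longlonglongrightarrow> z ! i)"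
  text \<open>A convergent sequence in the finite grid is eventually constant.\<close>
  have "\<forall>\<^sub>F k in sequentially. w k ! i = z ! i" if "i < n" for i
  proof -
    have "open (- (Sbar S - {z ! i}))"
      using assms by (intro open_Compl finite_imp_closed) (simp add: Sbar_def)
    then have "\<forall>\<^sub>F k in sequentially. w k ! i \<in> - (Sbar S - {z ! i})"
      using w that by (intro topological_tendstoD) auto
    moreover have "w k ! i \<in> Sbar S" for k
    proof -
      have "length (w k) = n" "set (w k) \<subseteq> Sbar S"
        using w by (auto simp: gdom_def)
      then show ?thesis
        using that nth_mem by blast
    qed
    ultimately show ?thesis
      by (auto elim!: eventually_mono)
  qed
  then have "\<forall>\<^sub>F k in sequentially. \<forall>i\<in>{..<n}. w k ! i = z ! i"
    by (intro eventually_ball_finite) auto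
  then have "\<forall>\<^sub>F k in sequentially. w k = z"
    using w z by (auto simp: gdom_def intro: nth_equalityI elim!: eventually_mono)
  then have "\<forall>\<^sub>F k in sequentially. sym_cdf n P (w k) = sym_cdf n P z"
    by (rule eventually_mono) simp
  then show "(\<lambda>k. sym_cdf n P (w k)) \<longlonglongrightarrow> sym_cdf n P z"
    by (rule tendsto_eventually)
qed

lemma box_indicator_permute:
  assumes "\<sigma> permutes {..<n}"
  shows "box_indicator n \<pi> (map (\<lambda>i. w ! \<sigma> i) [0..<n]) = box_indicator n (\<pi> \<circ> inv \<sigma>) w"
proof
  fix z
  have "box_indicator n (\<pi> \<circ> inv \<sigma>) w z = (\<Prod>i<n. of_bool (ereal (z (\<pi> (inv \<sigma> (\<sigma> i)))) \<le> w ! \<sigma> i))"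
    unfolding box_indicator_def by (subst prod.permute[OF assms]) (simp add: comp_def)
  also have "\<dots> = box_indicator n \<pi> (map (\<lambda>i. w ! \<sigma> i) [0..<n]) z"
    unfolding box_indicator_def using permutes_inverses(2)[OF assms] by (intro prod.cong) auto
  finally show "box_indicator n \<pi> (map (\<lambda>i. w ! \<sigma> i) [0..<n]) z = box_indicator n (\<pi> \<circ> inv \<sigma>) w z"
    by simp
qed

lemma sym_cdf_permute:
  assumes "\<sigma> permutes {..<n}"
  shows "sym_cdf n P (map (\<lambda>i. w ! \<sigma> i) [0..<n]) = sym_cdf n P w"
proof -
  have "(\<Sum>\<pi>\<in>perms n. \<integral>z. box_indicator n (\<pi> \<circ> inv \<sigma>) w z \<partial>P) = (\<Sum>\<pi>\<in>perms n. \<integral>z. box_indicator n \<pi> w z \<partial>P)"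
    by (rule sum.reindex_bij_witness[where i="\<lambda>\<pi>. \<pi> \<circ> \<sigma>" and j="\<lambda>\<pi>. \<pi> \<circ> inv \<sigma>"])
       (use assms in \<open>auto simp: comp_assoc permutes_inv_o permutes_compose permutes_inv\<close>)
  then show ?thesis
    by (simp add: sym_cdf_def box_indicator_permute[OF assms])
qed

lemma sym_cdf_in_Gn:
  assumes "P \<in> Pn n" "finite S"
  shows "sym_cdf n P \<in> Gn n S"
  unfolding Gn_def n_increasing_on_grid_def
  using sym_cdf_bounds[OF assms(1)] sym_cdf_right_cont_on_grid[OF assms(2)] sym_cdf_top[OF assms(1)]
    sym_cdf_eq_0[OF assms(1)] sym_cdf_n_increasing[OF assms(1)]
  by (auto simp: gdom_def)

lemma symmetric_on_grid_sym_cdf: "symmetric_on_grid n S (sym_cdf n P)"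
  by (simp add: symmetric_on_grid_def sym_cdf_permute)

lemma makespan_alg_alloc:
  "makespan n T1 T2 (alg_alloc n T1 T2 z) =
    max (\<Sum>j<n. if T1 j / T2 j < z j then T1 j else 0) (\<Sum>j<n. if \<not> T1 j / T2 j < z j then T2 j else 0)"
proof -
  have "alg_alloc n T1 T2 z \<inter> {..<n} = {..<n} \<inter> {j. T1 j / T2 j < z j}"
    "{..<n} - alg_alloc n T1 T2 z = {..<n} \<inter> {j. \<not> T1 j / T2 j < z j}"
    by (auto simp: alg_alloc_def)
  then show ?thesis
    by (simp add: makespan_def sum.inter_restrict)
qed

lemma makespan_nonneg: "pos_times n T1 T2 \<Longrightarrow> 0 \<le> makespan n T1 T2 A"
  unfolding makespan_def pos_times_def
  by (auto intro!: sum_nonneg simp: less_imp_le le_max_iff_disj)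

lemma makespan_le_sum: "pos_times n T1 T2 \<Longrightarrow> makespan n T1 T2 A \<le> (\<Sum>j<n. T1 j + T2 j)"
  unfolding makespan_def pos_times_def sum.distrib
  by (intro max.boundedI add_increasing2 add_increasing sum_nonneg sum_mono2) (auto simp: less_imp_le)

lemma opt_makespan_pos:
  assumes "pos_times n T1 T2" "0 < n"
  shows "0 < opt_makespan n T1 T2"
proof -
  have "0 < makespan n T1 T2 A" for A
  proof (cases "0 \<in> A")
    case True
    then have "T1 0 \<le> (\<Sum>j\<in>A \<inter> {..<n}. T1 j)"
      using assms unfolding pos_times_def by (intro member_le_sum) (auto simp: less_imp_le)
    then show ?thesis
      using assms unfolding makespan_def pos_times_def by (auto simp: less_max_iff_disj)
  next
    case False
    then have "T2 0 \<le> (\<Sum>j\<in>{..<n} - A. T2 j)"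
      using assms unfolding pos_times_def by (intro member_le_sum) (auto simp: less_imp_le)
    then show ?thesis
      using assms unfolding makespan_def pos_times_def by (auto simp: less_max_iff_disj)
  qed
  then show ?thesis
    unfolding opt_makespan_def by (subst Min_gr_iff) auto
qed

lemma opt_makespan_le: "A \<subseteq> {..<n} \<Longrightarrow> opt_makespan n T1 T2 \<le> makespan n T1 T2 A"
  unfolding opt_makespan_def by (rule Min_le) auto

lemma integrable_makespan_alg_alloc:
  assumes P: "P \<in> Pn n" and T: "pos_times n T1 T2"
  shows "integrable P (\<lambda>z. makespan n T1 T2 (alg_alloc n T1 T2 z))"
proof (rule Pn_integrable_bounded[OF P])
  have "\<And>j. j < n \<Longrightarrow> (\<lambda>z. z j) \<in> borel_measurable P"
    using Pn_component_measurable[OF P] .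
  then show "(\<lambda>z. makespan n T1 T2 (alg_alloc n T1 T2 z)) \<in> borel_measurable P"
    unfolding makespan_alg_alloc by measurable
  show "\<bar>makespan n T1 T2 (alg_alloc n T1 T2 z)\<bar> \<le> (\<Sum>j<n. T1 j + T2 j)" for z
    using makespan_nonneg[OF T] makespan_le_sum[OF T] by (simp add: abs_of_nonneg)
qed

lemma ratio_T_le_ratio_P: "pos_times n T1 T2 \<Longrightarrow> ereal (ratio_T n P T1 T2) \<le> ratio_P n P"
  unfolding ratio_P_def by (rule SUP_upper2[where i="(T1, T2)"]) auto

section \<open>The two-task instance\<close>

definition two_task_cost :: "real \<Rightarrow> real \<Rightarrow> real \<Rightarrow> real \<Rightarrow> real" where
  "two_task_cost x y s t = 1 + y - min 1 (1 - 1 / x + y) * of_bool (s \<le> x) - y * of_bool (t \<le> y)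
      + min (1 + 1 / x) (1 + y) * (of_bool (s \<le> x) * of_bool (t \<le> y))"

lemma two_task_cost_le_max:
  assumes "0 < x" "0 < y"
  shows "two_task_cost x y s t \<le>
    max (of_bool (x < s) + y * of_bool (y < t)) (of_bool (s \<le> x) / x + of_bool (t \<le> y))"
  using assms by (cases "s \<le> x"; cases "t \<le> y") (auto simp: two_task_cost_def min_def max_def)

lemma two_task_cost_le_makespan:
  assumes "pos_times n T1 T2" "a < n" "b < n" "a \<noteq> b" "0 < x" "0 < y"
    and "T1 a = 1" "T2 a = 1 / x" "T1 b = y" "T2 b = 1"
  shows "two_task_cost x y (z a) (z b) \<le> makespan n T1 T2 (alg_alloc n T1 T2 z)"
proof -
  let ?D = "alg_alloc n T1 T2 z"
  have a: "a \<in> ?D \<longleftrightarrow> x < z a" and b: "b \<in> ?D \<longleftrightarrow> y < z b"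
    using assms by (simp_all add: alg_alloc_def)
  have nonneg: "\<And>j. j < n \<Longrightarrow> 0 \<le> T1 j" "\<And>j. j < n \<Longrightarrow> 0 \<le> T2 j"
    using assms(1) by (auto simp: pos_times_def less_imp_le)
  have "of_bool (x < z a) + y * of_bool (y < z b) \<le> (\<Sum>j\<in>?D \<inter> {..<n}. T1 j)"
    using sum_ge_two_terms[of "?D \<inter> {..<n}" a b T1] assms a b nonneg by (simp add: mult.commute)
  moreover have "of_bool (z a \<le> x) / x + of_bool (z b \<le> y) \<le> (\<Sum>j\<in>{..<n} - ?D. T2 j)"
    using sum_ge_two_terms[of "{..<n} - ?D" a b T2] assms a b nonneg by (simp add: not_less)
  ultimately show ?thesis
    using two_task_cost_le_max[OF assms(5,6), of "z a" "z b"]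
    unfolding makespan_def by linarith
qed

lemma integrable_two_task_indicators:
  assumes P: "P \<in> Pn n" and "a < n" "b < n"
  shows "integrable P (\<lambda>z. of_bool (z a \<le> x) :: real)" "integrable P (\<lambda>z. of_bool (z b \<le> y) :: real)"
    "integrable P (\<lambda>z. of_bool (z a \<le> x) * of_bool (z b \<le> y) :: real)"
proof -
  have "(\<lambda>z. z a) \<in> borel_measurable P" "(\<lambda>z. z b) \<in> borel_measurable P"
    using Pn_component_measurable[OF P] assms by auto
  then show "integrable P (\<lambda>z. of_bool (z a \<le> x) :: real)" "integrable P (\<lambda>z. of_bool (z b \<le> y) :: real)"
    "integrable P (\<lambda>z. of_bool (z a \<le> x) * of_bool (z b \<le> y) :: real)"
    by (auto intro!: Pn_integrable_bounded[OF P, where B=1])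
qed

lemma integrable_two_task_cost:
  assumes P: "P \<in> Pn n" and "a < n" "b < n"
  shows "integrable P (\<lambda>z. two_task_cost x y (z a) (z b))"
proof -
  interpret prob_space P using Pn_prob_space[OF P] .
  show ?thesis
    using integrable_two_task_indicators[OF assms] unfolding two_task_cost_def by auto
qed

lemma integral_two_task_cost:
  assumes P: "P \<in> Pn n" and "a < n" "b < n"
  shows "(\<integral>z. two_task_cost x y (z a) (z b) \<partial>P) =
      1 + y - min 1 (1 - 1 / x + y) * (\<integral>z. of_bool (z a \<le> x) \<partial>P) - y * (\<integral>z. of_bool (z b \<le> y) \<partial>P)
      + min (1 + 1 / x) (1 + y) * (\<integral>z. of_bool (z a \<le> x) * of_bool (z b \<le> y) \<partial>P)"
proof -
  interpret prob_space P using Pn_prob_space[OF P] .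
  show ?thesis
    using integrable_two_task_indicators[OF assms] unfolding two_task_cost_def by (simp add: prob_space)
qed

text \<open>The paper's lower-bound instance: tasks \<open>a\<close> and \<open>b\<close> with processing times \<open>(1, 1/x)\<close>
  and \<open>(y, 1)\<close>, and all other tasks of negligible size \<open>d/n\<close>.\<close>
lemma integral_two_task_cost_le_ratio_P:
  assumes P: "P \<in> Pn n" and ab: "a < n" "b < n" "a \<noteq> b" and xy: "0 < x" "0 < y"
  shows "ereal (\<integral>z. two_task_cost x y (z a) (z b) \<partial>P) \<le> ratio_P n P"
proof (rule ereal_le_of_le_mult_1_plus)
  fix d :: real
  assume d: "0 < d"
  define e where "e = d / n"
  define T1 where "T1 j = (if j = a then 1 else if j = b then y else e)" for j
  define T2 where "T2 j = (if j = a then 1 / x else if j = b then 1 else e)" for j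
  have n: "0 < n"
    using ab by simp
  have e: "0 < e" "real n * e = d"
    using d n by (simp_all add: e_def)
  have T: "pos_times n T1 T2"
    using xy e by (simp add: pos_times_def T1_def T2_def)
  have "(\<integral>z. two_task_cost x y (z a) (z b) \<partial>P) \<le> exp_makespan n P T1 T2"
    unfolding exp_makespan_def
    using two_task_cost_le_makespan[OF T ab xy] ab
    by (intro integral_mono integrable_two_task_cost[OF P] integrable_makespan_alg_alloc[OF P T] ab(1,2))
       (simp_all add: T1_def T2_def)
  also have "\<dots> = ratio_T n P T1 T2 * opt_makespan n T1 T2"
    using opt_makespan_pos[OF T n] by (simp add: ratio_T_def)
  also have "\<dots> \<le> ratio_T n P T1 T2 * (1 + d)"
  proof (rule mult_left_mono)
    have "(\<Sum>j\<in>{..<n} - {a}. T2 j) \<le> (\<Sum>j\<in>{..<n} - {a}. of_bool (j = b) + e)"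
      using e by (intro sum_mono) (auto simp: T2_def)
    also have "\<dots> \<le> (\<Sum>j<n. of_bool (j = b) + e)"
      using e by (intro sum_mono2) auto
    also have "\<dots> = 1 + d"
      using ab e by (simp add: sum.distrib)
    finally have "makespan n T1 T2 {a} \<le> 1 + d"
      using ab d by (simp add: makespan_def T1_def)
    then show "opt_makespan n T1 T2 \<le> 1 + d"
      using opt_makespan_le[of "{a}" n T1 T2] ab by simp
    show "0 \<le> ratio_T n P T1 T2"
      using opt_makespan_pos[OF T n] makespan_nonneg[OF T]
      by (simp add: ratio_T_def exp_makespan_def)
  qed
  finally have "ereal (\<integral>z. two_task_cost x y (z a) (z b) \<partial>P) \<le> ereal (ratio_T n P T1 T2) * ereal (1 + d)"
    by simp
  also have "\<dots> \<le> ratio_P n P * ereal (1 + d)"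
    using ratio_T_le_ratio_P[OF T] d by (intro ereal_mult_right_mono) auto
  finally show "ereal (\<integral>z. two_task_cost x y (z a) (z b) \<partial>P) \<le> ratio_P n P * ereal (1 + d)" .
qed

lemma box_indicator_two:
  "n = Suc (Suc m) \<Longrightarrow> box_indicator n \<pi> (a # b # replicate m \<infinity>) z =
    of_bool (ereal (z (\<pi> 0)) \<le> a) * of_bool (ereal (z (\<pi> 1)) \<le> b)"
  unfolding box_indicator_def by (simp add: prod.lessThan_Suc_shift del: prod.lessThan_Suc)

lemma phi_sym_cdf:
  assumes P: "P \<in> Pn n" and n: "2 \<le> n"
  shows "phi n (sym_cdf n P) x y = (\<Sum>\<pi>\<in>perms n. \<integral>z. two_task_cost x y (z (\<pi> 0)) (z (\<pi> 1)) \<partial>P) / fact n"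
proof -
  obtain m where m: "n = Suc (Suc m)"
    using n by (metis add_2_eq_Suc le_Suc_ex)
  have swap: "Transposition.transpose 0 1 permutes {..<n}"
    using n by (intro permutes_swap_id) auto
  have y_swapped: "ereal y # replicate (n - 1) \<infinity> = map (\<lambda>i. (\<infinity> # ereal y # replicate m \<infinity>) ! Transposition.transpose 0 1 i) [0..<n]"
  proof (rule nth_equalityI)
    fix i
    assume "i < length (ereal y # replicate (n - 1) \<infinity>)"
    then have "i < n"
      using n by simp
    then have "map (\<lambda>i. (\<infinity> # ereal y # replicate m \<infinity>) ! Transposition.transpose 0 1 i) [0..<n] ! i
        = (\<infinity> # ereal y # replicate m \<infinity>) ! Transposition.transpose 0 1 i"
      by simp
    with \<open>i < n\<close> show "(ereal y # replicate (n - 1) \<infinity>) ! i =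
        map (\<lambda>i. (\<infinity> # ereal y # replicate m \<infinity>) ! Transposition.transpose 0 1 i) [0..<n] ! i"
      by (cases "i = 0"; cases "i = 1") (auto simp: m transpose_def nth_Cons')
  qed (simp add: m)
  have y_first: "sym_cdf n P (ereal y # replicate (n - 1) \<infinity>) = sym_cdf n P (\<infinity> # ereal y # replicate m \<infinity>)"
    unfolding y_swapped by (rule sym_cdf_permute[OF swap])
  have "ereal x # replicate (n - 1) \<infinity> = ereal x # \<infinity> # replicate m \<infinity>"
    "ereal x # ereal y # replicate (n - 2) \<infinity> = ereal x # ereal y # replicate m \<infinity>"
    by (simp_all add: m)
  moreover have "\<pi> 0 < n" "\<pi> 1 < n" if "\<pi> permutes {..<n}" for \<pi>
    using n by (simp_all add: permutes_lessThan_less[OF that])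
  ultimately show ?thesis
    unfolding phi_def y_first
    by (simp add: sym_cdf_def box_indicator_two[OF m] integral_two_task_cost[OF P]
        sum.distrib sum_subtractf sum_distrib_left[symmetric] card_permutations
        diff_divide_distrib add_divide_distrib)
qed

lemma phi_sym_cdf_le_ratio_P:
  assumes P: "P \<in> Pn n" and n: "2 \<le> n" and xy: "0 < x" "0 < y"
  shows "ereal (phi n (sym_cdf n P) x y) \<le> ratio_P n P"
proof -
  have "ereal (\<integral>z. two_task_cost x y (z (\<pi> 0)) (z (\<pi> 1)) \<partial>P) \<le> ratio_P n P"
    if "\<pi> permutes {..<n}" for \<pi>
  proof (rule integral_two_task_cost_le_ratio_P[OF P _ _ _ xy])
    show "\<pi> 0 < n" "\<pi> 1 < n"
      using n by (simp_all add: permutes_lessThan_less[OF that])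
    show "\<pi> 0 \<noteq> \<pi> 1"
      using permutes_inj[OF that] by (auto dest: injD)
  qed
  moreover have "perms n \<noteq> {}"
    using permutes_id by blast
  ultimately have "ereal ((\<Sum>\<pi>\<in>perms n. \<integral>z. two_task_cost x y (z (\<pi> 0)) (z (\<pi> 1)) \<partial>P) / card (perms n))
      \<le> ratio_P n P"
    by (intro ereal_mean_le) (auto simp: finite_permutations)
  then show ?thesis
    by (simp add: phi_sym_cdf[OF P n] card_permutations)
qed

theorem theorem6:
  fixes n :: nat and P :: "(nat \<Rightarrow> real) measure" and S :: "real set"
  assumes "n \<ge> 2" and "P \<in> Cn n" and "finite S" and "S \<subseteq> {0<..}"
  shows "ratio_P n P \<ge> Rn n \<and> Rn n \<ge> Rn_grid n S"
proof
  show "Rn n \<le> ratio_P n P"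
    using assms(2) unfolding Rn_def Cn_def by (auto intro: INF_lower)
next
  show "Rn_grid n S \<le> Rn n"
    unfolding Rn_def
  proof (rule INF_greatest)
    fix Q
    assume Q: "Q \<in> Pn n"
    have "Rn_grid n S \<le> (SUP p \<in> S \<times> S. ereal (phi n (sym_cdf n Q) (fst p) (snd p)))"
      unfolding Rn_grid_def using sym_cdf_in_Gn[OF Q assms(3)] symmetric_on_grid_sym_cdf
      by (intro INF_lower) auto
    also have "\<dots> \<le> ratio_P n Q"
      using assms(1,4) by (intro SUP_least phi_sym_cdf_le_ratio_P[OF Q]) auto
    finally show "Rn_grid n S \<le> ratio_P n Q" .
  qed
qed

end
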